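(* Let $(X,\rho)$ be a metric space, $A\in CL(X)$ and $(A_k)\subset CL(X)$. Suppose that $f\colon[0,\infty)\to[0,\infty)$ is an unbounded modulus such that $\lim_{t\to\infty}\frac{f(t)}{t}>0$ and there is $c\in(0,\infty)$ with $f(xy)\ge c\,f(x)\,f(y)$ for all $x,y\in[0,\infty)$. Then: (i) if $(A_k)$ is Wijsman strongly Cesàro summable to $A$ with respect to $f$, then $(A_k)$ is $f$-Wijsman statistically convergent to $A$; (ii) if $(A_k)$ is Wijsman bounded and $f$-Wijsman statistically convergent to $A$, then $(A_k)$ is Wijsman strongly Cesàro summable to $A$ with respect to $f$.
   Context: A modulus is a function $f\colon[0,\infty)\to[0,\infty)$ such that $f(x)=0$ iff $x=0$, $f$ is subadditive, increasing and continuous. $CL(X)$ denotes the set of all non-empty closed subsets of $(X,\rho)$, and $d(x,B)=\inf_{y\in B}\rho(x,y)$. $(A_k)$ is Wijsman bounded if $\sup_k d(x,A_k)<\infty$ for each $x\in X$. For an unbounded modulus $f$ and $K\subseteq\mathbb N$, the $f$-density is $d^f(K)=\lim_{n\to\infty}\frac{f(|\{k\le n:k\in K\}|)}{f(n)}$ (when the limit exists). $(A_k)$ is $f$-Wijsman statistically convergent to $A$ if for every $x\in X$ and every $\varepsilon>0$ the set $\{k:|d(x,A_k)-d(x,A)|\ge\varepsilon\}$ has $f$-density $0$. $(A_k)$ is Wijsman strongly Cesàro summable to $A$ with respect to $f$ if $\lim_{n\to\infty}\frac1n\sum_{k=1}^n f(|d(x,A_k)-d(x,A)|)=0$ for every $x\in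 X$. *)

theory Defs
  imports "HOL-Analysis.Analysis"
begin

definition modulus :: "(real \<Rightarrow> real) \<Rightarrow> bool" where
  "modulus f \<longleftrightarrow>
     (\<forall>x\<ge>0. f x \<ge> 0) \<and>
     (\<forall>x\<ge>0. f x = 0 \<longleftrightarrow> x = 0) \<and>
     (\<forall>x\<ge>0. \<forall>y\<ge>0. f (x + y) \<le> f x + f y) \<and>
     (\<forall>x\<ge>0. \<forall>y\<ge>x. f x \<le> f y) \<and>
     continuous_on {0..} f"

definition unbounded_modulus :: "(real \<Rightarrow> real) \<Rightarrow> bool" where
  "unbounded_modulus f \<longleftrightarrow> modulus f \<and> \<not> bdd_above (f ` {0..})"

definition CL :: "'a::metric_space set set" where
  "CL = {B. B \<noteq> {} \<and> closed B}"

definition f_density_zero :: "(real \<Rightarrow> real) \<Rightarrow> nat set \<Rightarrow> bool" where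
  "f_density_zero f K \<longleftrightarrow>
     ((\<lambda>n. f (real (card {k \<in> {1..n}. k \<in> K})) / f (real n)) \<longlonglongrightarrow> 0)"

definition wijsman_bounded :: "(nat \<Rightarrow> 'a::metric_space set) \<Rightarrow> bool" where
  "wijsman_bounded As \<longleftrightarrow> (\<forall>x. bdd_above (range (\<lambda>k. infdist x (As k))))"

definition f_wijsman_statistically_convergent ::
    "(real \<Rightarrow> real) \<Rightarrow> (nat \<Rightarrow> 'a::metric_space set) \<Rightarrow> 'a set \<Rightarrow> bool" where
  "f_wijsman_statistically_convergent f As A \<longleftrightarrow>
     (\<forall>x. \<forall>\<epsilon>>0. f_density_zero f {k. \<bar>infdist x (As k) - infdist x A\<bar> \<ge> \<epsilon>})"

definition wijsman_strongly_cesaro_summable ::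
    "(real \<Rightarrow> real) \<Rightarrow> (nat \<Rightarrow> 'a::metric_space set) \<Rightarrow> 'a set \<Rightarrow> bool" where
  "wijsman_strongly_cesaro_summable f As A \<longleftrightarrow>
     (\<forall>x. (\<lambda>n. (\<Sum>k=1..n. f \<bar>infdist x (As k) - infdist x A\<bar>) / real n) \<longlonglongrightarrow> 0)"

end

theory Submission
  imports Defs
begin

text \<open>Subadditivity gives f n \<le> n f(1), and the positive limit of f(t)/t gives
  f n \<ge> \<delta> n, so f-density zero coincides with ordinary density zero. The theorem then
  reduces to the classical equivalence of strong Cesaro summability and statistical
  convergence for bounded sequences.\<close>

definition density_zero :: "nat set \<Rightarrow> bool" where
  "density_zero K \<longleftrightarrow> ((\<lambda>n. real (card {k \<in> {1..n}. k \<in> K}) / real n) \<longlonglongrightarrow> 0)"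

lemma modulus_nonneg: "modulus f \<Longrightarrow> 0 \<le> x \<Longrightarrow> 0 \<le> f x"
  unfolding modulus_def by auto

lemma modulus_zero: "modulus f \<Longrightarrow> f 0 = 0"
  unfolding modulus_def by auto

lemma modulus_pos: "modulus f \<Longrightarrow> 0 < x \<Longrightarrow> 0 < f x"
  unfolding modulus_def by (metis less_eq_real_def less_imp_neq)

lemma modulus_mono: "modulus f \<Longrightarrow> 0 \<le> x \<Longrightarrow> x \<le> y \<Longrightarrow> f x \<le> f y"
  unfolding modulus_def by auto

lemma modulus_of_nat_le:
  assumes "modulus f"
  shows "f (real m) \<le> real m * f 1"
proof (induction m)
  case 0
  then show ?case using modulus_zero[OF assms] by simp
next
  case (Suc m)
  have "f (real m + 1) \<le> f (real m) + f 1" using assms unfolding modulus_def by auto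
  then show ?case using Suc by (simp add: algebra_simps)
qed

lemma modulus_of_nat_ge:
  assumes "modulus f" "L > 0" "((\<lambda>t. f t / t) \<longlongrightarrow> L) at_top"
  obtains \<delta> where "\<delta> > 0" "\<And>m::nat. \<delta> * real m \<le> f (real m)"
proof -
  obtain T where T: "T \<ge> 1" "\<And>t. t \<ge> T \<Longrightarrow> f t / t > L/2"
    using order_tendstoD(1)[OF assms(3), of "L/2"] assms(2)
    by (auto simp: eventually_at_top_linorder) (metis max.cobounded1 max.cobounded2 order_trans)
  define \<delta> where "\<delta> = min (L/2) (f 1 / T)"
  have f1: "f 1 > 0" using modulus_pos[OF assms(1)] by simp
  have "\<delta> * real m \<le> f (real m)" for m :: nat
  proof (cases "real m \<ge> T")
    case True
    then have "L/2 < f (real m) / real m" "real m > 0" using T by auto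
    then have "L/2 * real m < f (real m)" by (simp add: pos_less_divide_eq)
    moreover have "\<delta> * real m \<le> L/2 * real m" unfolding \<delta>_def by (intro mult_right_mono min.cobounded1) simp
    ultimately show ?thesis by linarith
  next
    case False
    show ?thesis
    proof (cases "m = 0")
      case False
      then have "f 1 \<le> f (real m)" using modulus_mono[OF assms(1)] by simp
      moreover have "\<delta> * real m \<le> f 1 / T * T"
        unfolding \<delta>_def using \<open>\<not> real m \<ge> T\<close> T(1) f1 by (intro mult_mono) auto
      ultimately show ?thesis using T(1) by simp
    qed (simp add: modulus_zero[OF assms(1)])
  qed
  moreover have "\<delta> > 0" unfolding \<delta>_def using f1 T(1) assms(2) by simp
  ultimately show thesis using that by blast
qed

lemma f_density_zero_iff_density_zero:
  assumes "modulus f" "L > 0" "((\<lambda>t. f t / t) \<longlongrightarrow> L) at_top"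
  shows "f_density_zero f K \<longleftrightarrow> density_zero K"
proof -
  obtain \<delta> where \<delta>: "\<delta> > 0" "\<And>m::nat. \<delta> * real m \<le> f (real m)"
    using modulus_of_nat_ge[OF assms] by blast
  define C where "C n = real (card {k \<in> {1..n}. k \<in> K})" for n
  define \<kappa> where "\<kappa> = f 1 / \<delta>"
  have bounds: "f (C n) / f (real n) \<le> \<kappa> * (C n / real n)"
               "C n / real n \<le> \<kappa> * (f (C n) / f (real n))" if "n \<ge> 1" for n
  proof -
    have "C n = real (card {k \<in> {1..n}. k \<in> K})" by (simp add: C_def)
    then have upper: "f (C n) \<le> C n * f 1" and lower: "\<delta> * C n \<le> f (C n)"
      using modulus_of_nat_le[OF assms(1)] \<delta>(2) by auto
    have fn: "\<delta> * real n \<le> f (real n)" "f (real n) \<le> real n * f 1"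
      using \<delta>(2) modulus_of_nat_le[OF assms(1)] by auto
    have pos: "\<delta> * real n > 0" using \<delta>(1) that by simp
    have "0 \<le> f (C n)" using modulus_nonneg[OF assms(1)] C_def by simp
    have "f (C n) / f (real n) \<le> C n * f 1 / (\<delta> * real n)"
      using upper fn pos \<open>0 \<le> f (C n)\<close> by (intro frac_le) auto
    then show "f (C n) / f (real n) \<le> \<kappa> * (C n / real n)" by (simp add: \<kappa>_def ac_simps)
    have "C n / real n = \<delta> * C n / (\<delta> * real n)" using \<delta>(1) by simp
    also have "\<dots> \<le> f (C n) / (\<delta> * f (real n) / f 1)"
      using lower fn pos \<delta>(1) modulus_pos[OF assms(1)] \<open>0 \<le> f (C n)\<close>
      by (intro frac_le) (auto simp: field_simps)
    finally show "C n / real n \<le> \<kappa> * (f (C n) / f (real n))"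
      by (simp add: \<kappa>_def field_simps)
  qed
  have nonneg: "0 \<le> f (C n) / f (real n)" "0 \<le> C n / real n" for n
    using modulus_nonneg[OF assms(1)] C_def by auto
  show ?thesis
    unfolding f_density_zero_def density_zero_def C_def[symmetric]
  proof
    assume "(\<lambda>n. f (C n) / f (real n)) \<longlonglongrightarrow> 0"
    from tendsto_mult_right_zero[OF this, of \<kappa>] show "(\<lambda>n. C n / real n) \<longlonglongrightarrow> 0"
      by (rule tendsto_sandwich[rotated 2, OF tendsto_const])
        (use nonneg bounds in \<open>auto simp: eventually_sequentially\<close>)
  next
    assume "(\<lambda>n. C n / real n) \<longlonglongrightarrow> 0"
    from tendsto_mult_right_zero[OF this, of \<kappa>] show "(\<lambda>n. f (C n) / f (real n)) \<longlonglongrightarrow> 0"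
      by (rule tendsto_sandwich[rotated 2, OF tendsto_const])
        (use nonneg bounds in \<open>auto simp: eventually_sequentially\<close>)
  qed
qed

lemma strong_cesaro_imp_density_zero:
  fixes a :: "nat \<Rightarrow> real"
  assumes "modulus f" "\<And>k. 0 \<le> a k" "\<epsilon> > 0"
    and "(\<lambda>n. (\<Sum>k=1..n. f (a k)) / real n) \<longlonglongrightarrow> 0"
  shows "density_zero {k. a k \<ge> \<epsilon>}"
proof -
  define C where "C n = real (card {k \<in> {1..n}. k \<in> {k. a k \<ge> \<epsilon>}})" for n
  have f\<epsilon>: "f \<epsilon> > 0" using modulus_pos[OF assms(1,3)] .
  have "C n * f \<epsilon> \<le> (\<Sum>k=1..n. f (a k))" for n
  proof -
    have "C n * f \<epsilon> = (\<Sum>k\<in>{k \<in> {1..n}. a k \<ge> \<epsilon>}. f \<epsilon>)" by (simp add: C_def)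
    also have "\<dots> \<le> (\<Sum>k\<in>{k \<in> {1..n}. a k \<ge> \<epsilon>}. f (a k))"
      by (intro sum_mono modulus_mono[OF assms(1)]) (use assms(3) in auto)
    also have "\<dots> \<le> (\<Sum>k=1..n. f (a k))"
      by (intro sum_mono2) (use modulus_nonneg[OF assms(1)] assms(2) in auto)
    finally show ?thesis .
  qed
  then have "C n \<le> (\<Sum>k=1..n. f (a k)) / f \<epsilon>" for n
    using f\<epsilon> by (simp add: pos_le_divide_eq)
  from divide_right_mono[OF this of_nat_0_le_iff]
  have upper: "C n / real n \<le> (\<Sum>k=1..n. f (a k)) / real n / f \<epsilon>" for n
    by (simp add: divide_divide_eq_left mult.commute)
  have "(\<lambda>n. C n / real n) \<longlonglongrightarrow> 0"
  proof (rule tendsto_sandwich[OF _ _ tendsto_const tendsto_divide_zero[OF assms(4)]])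
    show "\<forall>\<^sub>F n in sequentially. 0 \<le> C n / real n" by (simp add: C_def)
    show "\<forall>\<^sub>F n in sequentially. C n / real n \<le> (\<Sum>k=1..n. f (a k)) / real n / f \<epsilon>"
      using upper by simp
  qed
  then show ?thesis unfolding density_zero_def C_def .
qed

lemma density_zero_imp_strong_cesaro:
  fixes a :: "nat \<Rightarrow> real"
  assumes mf: "modulus f" and a: "\<And>k. 0 \<le> a k" "\<And>k. a k \<le> M"
    and dz: "\<And>\<epsilon>. \<epsilon> > 0 \<Longrightarrow> density_zero {k. a k \<ge> \<epsilon>}"
  shows "(\<lambda>n. (\<Sum>k=1..n. f (a k)) / real n) \<longlonglongrightarrow> 0"
proof (rule LIMSEQ_I)
  fix e :: real assume "e > 0"
  have fM: "0 \<le> f M" using modulus_nonneg[OF mf] a order_trans by blast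
  obtain \<epsilon> where \<epsilon>: "\<epsilon> > 0" "f \<epsilon> < e/2"
  proof -
    have "continuous_on {0..} f" using mf unfolding modulus_def by simp
    then obtain d where d: "d > 0" "\<And>t. t \<in> {0..} \<Longrightarrow> dist t 0 < d \<Longrightarrow> dist (f t) (f 0) < e/2"
      using \<open>e > 0\<close> unfolding continuous_on_iff by (metis atLeast_iff half_gt_zero order_refl)
    have "dist (f (d/2)) (f 0) < e/2" using d by (intro d(2)) auto
    then show thesis using that[of "d/2"] d(1) modulus_zero[OF mf] by (simp add: dist_real_def)
  qed
  define C where "C n = real (card {k \<in> {1..n}. k \<in> {k. a k \<ge> \<epsilon>}})" for n
  have "(\<lambda>n. C n / real n * f M) \<longlonglongrightarrow> 0"
    using tendsto_mult_left_zero dz[OF \<epsilon>(1)] unfolding density_zero_def C_def by blast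
  from order_tendstoD(2)[OF this, of "e/2"] obtain N
    where N: "\<And>n. n \<ge> N \<Longrightarrow> C n / real n * f M < e/2"
    using \<open>e > 0\<close> unfolding eventually_sequentially by auto
  show "\<exists>N. \<forall>n\<ge>N. norm ((\<Sum>k=1..n. f (a k)) / real n - 0) < e"
  proof (intro exI allI impI)
    fix n assume n: "n \<ge> max N 1"
    have "f (a k) \<le> f \<epsilon> + (if a k \<ge> \<epsilon> then f M else 0)" for k
      using modulus_mono[OF mf, of "a k" M] modulus_mono[OF mf, of "a k" \<epsilon>]
        modulus_nonneg[OF mf, of \<epsilon>] a[of k] \<epsilon>(1) fM by auto
    then have "(\<Sum>k=1..n. f (a k)) \<le> (\<Sum>k=1..n. f \<epsilon> + (if a k \<ge> \<epsilon> then f M else 0))"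
      by (intro sum_mono)
    also have "\<dots> = real n * f \<epsilon> + C n * f M"
      by (simp add: sum.distrib sum.If_cases Int_def C_def)
    finally have "(\<Sum>k=1..n. f (a k)) / real n \<le> f \<epsilon> + C n / real n * f M"
      using n by (simp add: field_simps)
    with \<epsilon>(2) N[of n] n have "(\<Sum>k=1..n. f (a k)) / real n < e" by linarith
    moreover have "0 \<le> (\<Sum>k=1..n. f (a k))"
      using modulus_nonneg[OF mf] a by (simp add: sum_nonneg)
    ultimately show "norm ((\<Sum>k=1..n. f (a k)) / real n - 0) < e" by simp
  qed
qed

theorem theorem4p7:
  fixes f :: "real \<Rightarrow> real"
    and A :: "'a::metric_space set"
    and As :: "nat \<Rightarrow> 'a set"
  assumes "A \<in> CL"
    and "\<forall>k. As k \<in> CL"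
    and "unbounded_modulus f"
    and "\<exists>L>0. ((\<lambda>t. f t / t) \<longlongrightarrow> L) at_top"
    and "\<exists>c>0. \<forall>x\<ge>0. \<forall>y\<ge>0. f (x * y) \<ge> c * f x * f y"
  shows "(wijsman_strongly_cesaro_summable f As A \<longrightarrow> f_wijsman_statistically_convergent f As A)
       \<and> (wijsman_bounded As \<and> f_wijsman_statistically_convergent f As A
            \<longrightarrow> wijsman_strongly_cesaro_summable f As A)"
proof -
  have mf: "modulus f" using assms(3) unfolding unbounded_modulus_def by simp
  obtain L where L: "L > 0" "((\<lambda>t. f t / t) \<longlongrightarrow> L) at_top" using assms(4) by blast
  have stat_iff: "f_wijsman_statistically_convergent f As A \<longleftrightarrow>
      (\<forall>x \<epsilon>. \<epsilon> > 0 \<longrightarrow> density_zero {k. \<bar>infdist x (As k) - infdist x A\<bar> \<ge> \<epsilon>})"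
    unfolding f_wijsman_statistically_convergent_def
      f_density_zero_iff_density_zero[OF mf L] by blast
  show ?thesis
  proof (intro conjI impI)
    assume "wijsman_strongly_cesaro_summable f As A"
    then show "f_wijsman_statistically_convergent f As A"
      unfolding stat_iff wijsman_strongly_cesaro_summable_def
      using strong_cesaro_imp_density_zero[OF mf] by simp
  next
    assume H: "wijsman_bounded As \<and> f_wijsman_statistically_convergent f As A"
    show "wijsman_strongly_cesaro_summable f As A"
      unfolding wijsman_strongly_cesaro_summable_def
    proof
      fix x
      obtain B where B: "\<And>k. infdist x (As k) \<le> B"
        using H unfolding wijsman_bounded_def bdd_above_def by blast
      have "\<bar>infdist x (As k) - infdist x A\<bar> \<le> B + infdist x A" for k
        using B[of k] infdist_nonneg[of x A] infdist_nonneg[of x "As k"] unfolding abs_le_iff by linarith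
      with H show "(\<lambda>n. (\<Sum>k=1..n. f \<bar>infdist x (As k) - infdist x A\<bar>) / real n) \<longlonglongrightarrow> 0"
        unfolding stat_iff by (intro density_zero_imp_strong_cesaro[OF mf]) auto
    qed
  qed
qed

end
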